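(* Let $\mathcal S$ be a chain-vanishing collection of nonempty subsets of a set $X$, and let $A,B\in\mathcal S$ with $A\perp B$. Then there is $C\in[A]_{\mathcal S}$ with $C\supseteq B$.
   Context: Fix a nonempty set $X$; $A^c:=X\setminus A$. $A\perp B$ means $A\cap B=\emptyset$ and $A\ne B^c$. For $A,B\in\mathcal S$, $B$ is $\mathcal S$-maximally orthogonal to $A$ if $B\perp A$ and no $C\in\mathcal S$ satisfies $C\perp A$, $C\supsetneq B$; $[A]_{\mathcal S}:=\{A\}\cup\{B\in\mathcal S:B$ is $\mathcal S$-maximally orthogonal to $A\}$. A chain is a sequence $(A_n)_{n\in\mathbb N}$ that is strictly increasing or strictly decreasing under inclusion; a decreasing (resp. increasing) chain is $\mathcal S$-vanishing if no $B\in\mathcal S$ satisfies $B\subseteq A_n$ (resp. $B\cap A_n=\emptyset$) for all $n$; $\mathcal S$ is chain-vanishing if every chain of members of $\mathcal S$ is $\mathcal S$-vanishing. *)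

theory Defs
  imports Main
begin

definition orth :: "'a set \<Rightarrow> 'a set \<Rightarrow> 'a set \<Rightarrow> bool" where
  "orth X A B \<longleftrightarrow> A \<inter> B = {} \<and> A \<noteq> X - B"

definition max_orth :: "'a set \<Rightarrow> 'a set set \<Rightarrow> 'a set \<Rightarrow> 'a set \<Rightarrow> bool" where
  "max_orth X S A B \<longleftrightarrow> B \<in> S \<and> orth X B A \<and>
     \<not> (\<exists>C\<in>S. orth X C A \<and> B \<subset> C)"

definition orth_class :: "'a set \<Rightarrow> 'a set set \<Rightarrow> 'a set \<Rightarrow> 'a set set" where
  "orth_class X S A = {A} \<union> {B \<in> S. max_orth X S A B}"

definition incr_chain :: "(nat \<Rightarrow> 'a set) \<Rightarrow> bool" where
  "incr_chain F \<longleftrightarrow> (\<forall>n. F n \<subset> F (Suc n))"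

definition decr_chain :: "(nat \<Rightarrow> 'a set) \<Rightarrow> bool" where
  "decr_chain F \<longleftrightarrow> (\<forall>n. F (Suc n) \<subset> F n)"

definition chain_vanishing :: "'a set set \<Rightarrow> bool" where
  "chain_vanishing S \<longleftrightarrow>
     (\<forall>F. (\<forall>n. F n \<in> S) \<longrightarrow>
        (decr_chain F \<longrightarrow> \<not> (\<exists>B\<in>S. \<forall>n. B \<subseteq> F n)) \<and>
        (incr_chain F \<longrightarrow> \<not> (\<exists>B\<in>S. \<forall>n. B \<inter> F n = {})))"

end

theory Submission
  imports Defs
begin

text \<open>If B lay in no set maximally orthogonal to A, then, starting from B, one could enlarge
  forever within the members of S orthogonal to A (dependent choice). The resulting increasing
  chain stays disjoint from A \<in> S, so it would not be S-vanishing.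
  Only the inclusion of S in the subsets of X is needed, to make orthogonality symmetric.\<close>

lemma orth_commute:
  assumes "A \<subseteq> X" and "orth X A B"
  shows "orth X B A"
  using assms unfolding orth_def by auto

lemma max_orth_in_orth_class:
  assumes "max_orth X S A C"
  shows "C \<in> orth_class X S A"
  using assms unfolding orth_class_def max_orth_def by simp

lemma incr_chain_if_no_maximal:
  assumes "P B" and "\<And>C. P C \<Longrightarrow> \<exists>D. P D \<and> C \<subset> D"
  shows "\<exists>F. incr_chain F \<and> (\<forall>n. P (F n))"
proof -
  obtain F where "\<forall>n. P (F n) \<and> F n \<subset> F (Suc n)"
    using dependent_nat_choice[of "\<lambda>_. P" "\<lambda>_ C D. C \<subset> D"] assms by auto
  then have "incr_chain F \<and> (\<forall>n. P (F n))"
    unfolding incr_chain_def by simp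
  then show ?thesis by auto
qed

lemma chain_vanishing_incr_chain_meets:
  assumes "chain_vanishing S" and "incr_chain F" and "\<forall>n. F n \<in> S" and "B \<in> S"
  shows "\<exists>n. B \<inter> F n \<noteq> {}"
  using assms unfolding chain_vanishing_def by metis

lemma chain_vanishing_max_orth_above:
  assumes "chain_vanishing S" and "A \<in> S" and "B \<in> S" and "orth X B A"
  shows "\<exists>C. max_orth X S A C \<and> B \<subseteq> C"
proof (rule ccontr)
  assume no_max: "\<nexists>C. max_orth X S A C \<and> B \<subseteq> C"
  define P where "P C \<longleftrightarrow> C \<in> S \<and> orth X C A \<and> B \<subseteq> C" for C
  have "\<exists>D. P D \<and> C \<subset> D" if PC: "P C" for C
  proof -
    from PC no_max have "\<not> max_orth X S A C" unfolding P_def by auto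
    then obtain D where "D \<in> S" "orth X D A" "C \<subset> D"
      using PC unfolding P_def max_orth_def by auto
    then show ?thesis using PC unfolding P_def by auto
  qed
  moreover have "P B" using assms(3,4) unfolding P_def by simp
  ultimately obtain F where F: "incr_chain F" "\<forall>n. P (F n)"
    using incr_chain_if_no_maximal[of P B] by auto
  then have "\<forall>n. F n \<in> S" and "\<forall>n. A \<inter> F n = {}"
    unfolding P_def orth_def by auto
  with chain_vanishing_incr_chain_meets[OF assms(1) F(1)] assms(2) show False
    by blast
qed

theorem mainTheorem11:
  fixes X :: "'a set" and S :: "'a set set" and A B :: "'a set"
  assumes "X \<noteq> {}"
    and "\<forall>D\<in>S. D \<noteq> {} \<and> D \<subseteq> X"
    and "chain_vanishing S"
    and "A \<in> S" and "B \<in> S" and "orth X A B"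
  shows "\<exists>C\<in>orth_class X S A. B \<subseteq> C"
proof -
  have "orth X B A"
    using orth_commute[of A X B] assms(2,4,6) by simp
  then obtain C where "max_orth X S A C" and "B \<subseteq> C"
    using chain_vanishing_max_orth_above assms(3-5) by metis
  then show ?thesis
    using max_orth_in_orth_class by blast
qed

end
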